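(* Let $A\in\mathbb{R}^{d\times d}$ and let $\mathbb{A}x=Ax$. Let $N\ge1$ and real coefficients $h_{k,j}$ ($1\le k\le N$, $0\le j\le k-1$) be given. Define \[ x_{k+1}=x_k-\sum_{j=0}^{k}h_{k+1,j}\,\mathbb{A}x_j,\qquad k=0,1,\dots,N-1, \] and its H-dual \[ \hat x_{k+1}=\hat x_k-\sum_{j=0}^{k}h_{N-j,N-k-1}\,\mathbb{A}\hat x_j,\qquad k=0,1,\dots,N-1. \] If $\hat x_0=x_0$, then $\hat x_N=x_N$. *)

theory Defs
  imports "HOL-Analysis.Analysis"
begin

end

theory Submission
  imports Defs "HOL-Computational_Algebra.Polynomial"
begin

(*
  Every iterate is a polynomial in A applied to the starting point: x_a = G_{0,a}(A) x_0, where
  G_{b,a} = propagator c b a is the coefficient with which x_b enters x_a. The G_{b,a} form the inverse of the unit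
  lower-triangular system matrix of the recurrence; as that inverse is two-sided, G obeys, besides
  the recursion in a that defines it, a recursion in b. The coefficients are polynomials in A and
  hence commute, so the recursion in b for h is the recursion in a for the H-dual coefficients read
  backwards: the dual G is G_{N-a,N-b}. In particular both methods have the same G_{0,N}.
*)

function propagator :: "(nat \<Rightarrow> nat \<Rightarrow> 'a::ring_1) \<Rightarrow> nat \<Rightarrow> nat \<Rightarrow> 'a" where
  "propagator c b a =
     (if a < b then 0 else if a = b then 1
      else propagator c b (a - 1) - (\<Sum>j = b..<a. c a j * propagator c b j))"
  by auto
termination by (relation "Wellfounded.measure (\<lambda>(c, b, a). a)") auto

declare propagator.simps [simp del]

lemma propagator_diag [simp]: "propagator c b b = 1"
  by (simp add: propagator.simps)

lemma propagator_Suc: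
  "b \<le> a \<Longrightarrow>
    propagator c b (Suc a) = propagator c b a - (\<Sum>j = b..a. c (Suc a) j * propagator c b j)"
  by (subst propagator.simps) (simp add: atLeastLessThanSuc_atLeastAtMost)

lemma sum_triangle_swap:
  fixes a b :: nat
  shows "(\<Sum>j\<in>{b<..a}. \<Sum>i\<in>{b<..j}. f i j) = (\<Sum>i\<in>{b<..a}. \<Sum>j = i..a. f i j)"
proof -
  have "(\<Sum>j\<in>{b<..a}. \<Sum>i\<in>{i. i \<in> {b<..a} \<and> i \<le> j}. f i j)
      = (\<Sum>i\<in>{b<..a}. \<Sum>j\<in>{j. j \<in> {b<..a} \<and> i \<le> j}. f i j)"
    by (rule sum.swap_restrict) auto
  moreover have "\<And>j. j \<in> {b<..a} \<Longrightarrow> {i. i \<in> {b<..a} \<and> i \<le> j} = {b<..j}"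
    and "\<And>i. i \<in> {b<..a} \<Longrightarrow> {j. j \<in> {b<..a} \<and> i \<le> j} = {i..a}"
    by auto
  ultimately show ?thesis
    by (metis (no_types, lifting) sum.cong)
qed

lemma propagator_Suc_source:
  assumes "b < a"
  shows "propagator c b a = propagator c (Suc b) a - (\<Sum>i\<in>{b<..a}. propagator c i a * c i b)"
  using assms
proof (induction a rule: less_induct)
  case (less a)
  then obtain a' where a: "a = Suc a'" and "b \<le> a'"
    by (cases a) auto
  show ?case
  proof (cases "a' = b")
    case True
    then have "a = Suc b" "{b<..Suc b} = {Suc b}"
      using a by auto
    then show ?thesis
      by (simp add: propagator_Suc)
  next
    case False
    with \<open>b \<le> a'\<close> have "b < a'" by simp
    have IH: "propagator c b j = propagator c (Suc b) j - (\<Sum>i\<in>{b<..j}. propagator c i j * c i b)"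
      if "j \<in> {b<..a'}" for j
      using less.IH that a by simp
    have row: "propagator c i a = propagator c i a' - (\<Sum>j = i..a'. c a j * propagator c i j)"
      if "i \<le> a'" for i
      using propagator_Suc[OF that, of c] a by simp
    define S1 where "S1 = (\<Sum>j\<in>{b<..a'}. c a j * propagator c (Suc b) j)"
    define S2 where "S2 = (\<Sum>i\<in>{b<..a'}. propagator c i a' * c i b)"
    define S3 where "S3 = (\<Sum>j\<in>{b<..a'}. \<Sum>i\<in>{b<..j}. c a j * propagator c i j * c i b)"
    have "{b..a'} = insert b {b<..a'}" "{Suc b..a'} = {b<..a'}" "{b<..a} = insert a {b<..a'}"
      using \<open>b < a'\<close> a by auto
    then have sum_split: "(\<Sum>j = b..a'. f j) = f b + (\<Sum>j\<in>{b<..a'}. f j)"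
      "(\<Sum>j = Suc b..a'. f j) = (\<Sum>j\<in>{b<..a'}. f j)"
      "(\<Sum>j\<in>{b<..a}. f j) = f a + (\<Sum>j\<in>{b<..a'}. f j)" for f :: "nat \<Rightarrow> 'a"
      using a by simp_all
    have "(\<Sum>j\<in>{b<..a'}. c a j * propagator c b j) = S1 - S3"
      by (simp add: IH S1_def S3_def right_diff_distrib sum_distrib_left mult.assoc sum_subtractf)
    moreover have "propagator c b a' = propagator c (Suc b) a' - S2"
      using less.IH[of a'] a \<open>b < a'\<close> by (simp add: S2_def)
    ultimately have lhs: "propagator c b a = propagator c (Suc b) a' - S2 - (c a b + (S1 - S3))"
      using \<open>b \<le> a'\<close> by (simp add: row sum_split(1))
    have col: "(\<Sum>i\<in>{b<..a'}. propagator c i a * c i b) = S2 - S3"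
      by (simp add: row S2_def S3_def left_diff_distrib sum_distrib_right sum_subtractf
          sum_triangle_swap)
    have rhs: "propagator c (Suc b) a = propagator c (Suc b) a' - S1"
      using \<open>b < a'\<close> by (simp add: row sum_split(2) S1_def)
    show ?thesis
      unfolding lhs rhs sum_split(3) col by (simp add: algebra_simps)
  qed
qed

lemma propagator_reflect:
  fixes c :: "nat \<Rightarrow> nat \<Rightarrow> 'a::comm_ring_1"
  assumes "b \<le> a" "a \<le> M"
  shows "propagator (\<lambda>i j. c (M - j) (M - i)) b a = propagator c (M - a) (M - b)"
  using assms
proof (induction a rule: less_induct)
  case (less a)
  show ?case
  proof (cases "a = b")
    case False
    with less.prems obtain a' where a: "a = Suc a'" and "b \<le> a'"
      by (cases a) auto
    have "M - a < M - b" "Suc (M - a) = M - a'"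
      using less.prems a False by auto
    have reindex: "(\<Sum>i\<in>{M - a<..M - b}. f i) = (\<Sum>j = b..a'. f (M - j))" for f :: "nat \<Rightarrow> 'a"
      by (rule sum.reindex_bij_witness[where i="\<lambda>j. M - j" and j="\<lambda>i. M - i"])
        (use less.prems a in auto)
    have "propagator (\<lambda>i j. c (M - j) (M - i)) b a
        = propagator c (M - a') (M - b) - (\<Sum>j = b..a'. c (M - j) (M - a) * propagator c (M - j) (M - b))"
      using less.IH less.prems a \<open>b \<le> a'\<close> by (simp add: propagator_Suc)
    also have "\<dots> = propagator c (M - a) (M - b)"
      using propagator_Suc_source[OF \<open>M - a < M - b\<close>, of c]
      by (simp add: \<open>Suc (M - a) = M - a'\<close> reindex mult.commute)
    finally show ?thesis .
  qed simp
qed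

lemma matrix_add_rdistrib: "(B + C) ** A = B ** A + C ** A"
  by (vector matrix_matrix_mult_def sum.distrib[symmetric] field_simps)

definition poly_mat :: "real poly \<Rightarrow> real^'n^'n \<Rightarrow> real^'n^'n" where
  "poly_mat p A = fold_coeffs (\<lambda>a M. a *\<^sub>R mat 1 + A ** M) p 0"

lemma poly_mat_0 [simp]: "poly_mat 0 A = 0"
  by (simp add: poly_mat_def)

lemma poly_mat_pCons [simp]: "poly_mat (pCons a p) A = a *\<^sub>R mat 1 + A ** poly_mat p A"
  by (cases "p = 0 \<and> a = 0") (auto simp: poly_mat_def)

lemma poly_mat_add [simp]: "poly_mat (p + q) A = poly_mat p A + poly_mat q A"
proof (induction p arbitrary: q)
  case (pCons a p)
  then show ?case
    by (cases q) (simp add: matrix_add_ldistrib scaleR_add_left algebra_simps)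
qed simp

lemma poly_mat_diff [simp]: "poly_mat (p - q) A = poly_mat p A - poly_mat q A"
  using poly_mat_add[of "p - q" q A] by (simp add: eq_diff_eq)

lemma poly_mat_sum: "poly_mat (\<Sum>i\<in>S. f i) A = (\<Sum>i\<in>S. poly_mat (f i) A)"
  by (induction S rule: infinite_finite_induct) simp_all

lemma poly_mat_smult [simp]: "poly_mat (smult a p) A = a *\<^sub>R poly_mat p A"
  by (induction p) (simp_all add: matrix_add_ldistrib matrix_scalar_ac scalar_matrix_assoc[symmetric]
      scaleR_add_right)

lemma poly_mat_mult: "poly_mat (p * q) A = poly_mat p A ** poly_mat q A"
  by (induction p) (simp_all add: matrix_add_rdistrib matrix_mul_assoc scalar_matrix_assoc[symmetric])

lemma poly_mat_1 [simp]: "poly_mat 1 A = mat 1"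
  by (simp add: one_pCons)

lemma sum_matrix_vector_mult: "(\<Sum>i\<in>S. f i) *v v = (\<Sum>i\<in>S. f i *v v)"
  by (induction S rule: infinite_finite_induct) (simp_all add: matrix_vector_mult_add_rdistrib)

lemma recurrence_solution:
  fixes A :: "real^'n^'n" and c :: "nat \<Rightarrow> nat \<Rightarrow> real poly"
  assumes rec: "\<And>k. k < N \<Longrightarrow> y (Suc k) = y k - (\<Sum>j\<le>k. poly_mat (c (Suc k) j) A *v y j)"
    and "a \<le> N"
  shows "y a = poly_mat (propagator c 0 a) A *v y 0"
  using \<open>a \<le> N\<close>
proof (induction a rule: less_induct)
  case (less a)
  show ?case
  proof (cases a)
    case (Suc k)
    have IH: "y j = poly_mat (propagator c 0 j) A *v y 0" if "j \<le> k" for j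
      using less.IH[of j] less.prems that Suc by simp
    have "poly_mat (c (Suc k) j) A *v y j = poly_mat (c (Suc k) j * propagator c 0 j) A *v y 0"
      if "j \<le> k" for j
      unfolding IH[OF that] by (simp add: poly_mat_mult matrix_vector_mul_assoc)
    then have "(\<Sum>j\<le>k. poly_mat (c (Suc k) j) A *v y j)
        = (\<Sum>j = 0..k. poly_mat (c (Suc k) j * propagator c 0 j) A *v y 0)"
      unfolding atMost_atLeast0 by (intro sum.cong) auto
    then have "y a = poly_mat (propagator c 0 k) A *v y 0
        - poly_mat (\<Sum>j = 0..k. c (Suc k) j * propagator c 0 j) A *v y 0"
      using rec[of k] IH[of k] less.prems Suc by (simp add: poly_mat_sum sum_matrix_vector_mult)
    then show ?thesis
      by (simp add: Suc propagator_Suc matrix_vector_mult_diff_rdistrib)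
  qed simp
qed

theorem propositionI1:
  fixes A :: "real ^ 'd ^ 'd"
    and h :: "nat \<Rightarrow> nat \<Rightarrow> real"
    and N :: nat
    and x xh :: "nat \<Rightarrow> real ^ 'd"
  assumes "N \<ge> 1"
    and x_rec: "\<And>k. k < N \<Longrightarrow>
           x (Suc k) = x k - (\<Sum>j\<le>k. h (Suc k) j *\<^sub>R (A *v x j))"
    and xh_rec: "\<And>k. k < N \<Longrightarrow>
           xh (Suc k) = xh k - (\<Sum>j\<le>k. h (N - j) (N - k - 1) *\<^sub>R (A *v xh j))"
    and "xh 0 = x 0"
  shows "xh N = x N"
proof -
  define c where "c i j = [:0, h i j:]" for i j
  have "xh N = poly_mat (propagator (\<lambda>i j. c (N - j) (N - i)) 0 N) A *v xh 0"
    by (rule recurrence_solution[where N = N])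
      (simp_all add: c_def xh_rec matrix_scalar_ac scaleR_matrix_vector_assoc)
  also have "\<dots> = poly_mat (propagator c 0 N) A *v x 0"
    using propagator_reflect[of 0 N N c] \<open>xh 0 = x 0\<close> by simp
  also have "\<dots> = x N"
    by (rule recurrence_solution[where N = N, symmetric])
      (simp_all add: c_def x_rec matrix_scalar_ac scaleR_matrix_vector_assoc)
  finally show ?thesis .
qed

end
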